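(* Let $s$ be a positive integer, $\alpha\in\mathbb{R}$, $\omega(t)=\alpha+t^s$, $0<R<1$, $m_0>0$, and let $$\varphi:\ \xi'=e^{i\omega(\xi\eta)}\xi\,(1+p(\xi,\eta)),\quad \eta'=e^{-i\omega(\xi\eta)}\eta\,(1+p(\xi,\eta))^{-1},$$ where $p$ is a power series starting with terms of order at least $2s+1$, converging on $\Delta_R$, with $\|p\|_R\le m_0$. For a positive integer $n$ put $$d_0=\min\Big\{\frac{R^{2s+1}}{2^{6s+6}m_0},\ \Big(\frac{1}{2n}\Big)^{1/(2s)},\ \frac{R}{16}\Big\}.$$ Then for every $1\le k\le n$ the iterate $\varphi^k$ is defined on $\Delta_{d_0}$ and maps $\Delta_{d_0}$ into $\Delta_{4d_0}$.
   Context: $\Delta_r=\{(\xi,\eta)\in\mathbb{C}^2:|\xi|<r,|\eta|<r\}$ and $\|p\|_R=\max_{|\xi|,|\eta|\le R}|p(\xi,\eta)|$. *)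

theory Defs
  imports "HOL-Analysis.Analysis"
begin

definition bidisc :: "real \<Rightarrow> (complex \<times> complex) set" where
  "bidisc r = {(x, y). norm x < r \<and> norm y < r}"

definition omega :: "real \<Rightarrow> nat \<Rightarrow> complex \<Rightarrow> complex" where
  "omega \<alpha> s t = of_real \<alpha> + t ^ s"

definition phi :: "real \<Rightarrow> nat \<Rightarrow> (complex \<Rightarrow> complex \<Rightarrow> complex)
    \<Rightarrow> complex \<times> complex \<Rightarrow> complex \<times> complex" where
  "phi \<alpha> s p z = (let x = fst z; y = snd z; w = omega \<alpha> s (x * y) in
     (exp (\<i> * w) * x * (1 + p x y), exp (- \<i> * w) * y / (1 + p x y)))"

text \<open>phi is defined at z iff z lies in the domain Delta_R of p and 1 + p(z) is nonzero.
  The iterate phi^k is defined at z iff phi is defined at each of z, phi z, ..., phi^(k-1) z.\<close>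
definition phi_defined_at :: "real \<Rightarrow> (complex \<Rightarrow> complex \<Rightarrow> complex)
    \<Rightarrow> complex \<times> complex \<Rightarrow> bool" where
  "phi_defined_at R p z \<longleftrightarrow> z \<in> bidisc R \<and> 1 + p (fst z) (snd z) \<noteq> 0"

definition iter_defined_at :: "real \<Rightarrow> nat \<Rightarrow> real \<Rightarrow> (complex \<Rightarrow> complex \<Rightarrow> complex)
    \<Rightarrow> nat \<Rightarrow> complex \<times> complex \<Rightarrow> bool" where
  "iter_defined_at \<alpha> s R p k z \<longleftrightarrow>
     (\<forall>j<k. phi_defined_at R p ((phi \<alpha> s p ^^ j) z))"

end

theory Submission
  imports Defs "HOL-Complex_Analysis.Conformal_Mappings"
begin

text \<open>
  The map phi preserves the product xy. Since p vanishes to order 2s+1, the maximum modulus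
  principle applied to t -> p(tx, ty) gives |p| <= m0 (4 d0 / R)^(2s+1) <= 1/(4n) on the bidisc
  of radius 4 d0. While an orbit stays in that bidisc, each step multiplies |x| and |y| by at most
  exp(|xy|^s + 2|p|) <= exp(1/n), because |Im omega(xy)| <= |xy|^s <= d0^(2s) <= 1/(2n). So during
  k <= n steps a point of the bidisc of radius d0 grows by a factor at most e < 4: it never leaves
  the bidisc of radius 4 d0, which lies in the domain of p and on which 1 + p does not vanish.
\<close>

lemma has_sum_imp_sums_antidiagonal:
  fixes f :: "nat \<times> nat \<Rightarrow> 'a :: {topological_comm_monoid_add, t3_space}"
  assumes "(f has_sum S) UNIV"
  shows "(\<lambda>k. \<Sum>i\<le>k. f (i, k - i)) sums S"
proof -
  have bij: "bij_betw (\<lambda>(k, i). (i, k - i)) (SIGMA k:UNIV. {..k}) (UNIV :: (nat \<times> nat) set)"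
    by (rule bij_betwI[where g = "\<lambda>(i, j). (i + j, i)"]) auto
  have "((\<lambda>(k, i). f (i, k - i)) has_sum S) (SIGMA k:UNIV. {..k})"
    using has_sum_reindex_bij_betw[OF bij, of f S] assms by (simp add: case_prod_unfold)
  then have "((\<lambda>k. \<Sum>i\<le>k. f (i, k - i)) has_sum S) UNIV"
    by (rule has_sum_SigmaD) auto
  then show ?thesis
    by (rule has_sum_imp_sums)
qed

lemma power_series_Schwarz_bound:
  fixes a :: "nat \<Rightarrow> complex"
  assumes sums: "\<And>t. norm t < r' \<Longrightarrow> (\<lambda>k. a k * t ^ k) sums f t"
    and vanish: "\<And>k. k < N \<Longrightarrow> a k = 0"
    and bound: "\<And>t. norm t = r \<Longrightarrow> norm (f t) \<le> M"
    and "0 < r" "r < r'" "norm t \<le> r"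
  shows "norm (f t) \<le> M * (norm t / r) ^ N"
proof -
  define h where "h t = (\<Sum>k. a (k + N) * t ^ k)" for t
  have h_sums: "(\<lambda>k. a (k + N) * t ^ k) sums h t" if "norm t < r'" for t
    using sums[OF that] unfolding h_def
    by (simp add: summable_powser_ignore_initial_segment sums_summable summable_sums)
  have factor: "f t = t ^ N * h t" if "norm t < r'" for t
  proof -
    have "(\<lambda>k. t ^ N * (a (k + N) * t ^ k)) sums (t ^ N * h t)"
      using h_sums[OF that] by (rule sums_mult)
    then have "(\<lambda>k. a (k + N) * t ^ (k + N)) sums (t ^ N * h t)"
      by (simp add: power_add mult_ac)
    then have "(\<lambda>k. a k * t ^ k) sums (t ^ N * h t)"
      using sums_iff_shift[of "\<lambda>k. a k * t ^ k" N] vanish by simp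
    then show ?thesis
      using sums[OF that] sums_unique2 by blast
  qed
  have "h holomorphic_on ball 0 r'"
    by (rule power_series_holomorphic[where a = "\<lambda>k. a (k + N)"]) (simp add: h_sums)
  then have hol: "h holomorphic_on cball 0 r"
    by (rule holomorphic_on_subset) (use \<open>r < r'\<close> in auto)
  have "norm (h t) \<le> M / r ^ N"
  proof (rule maximum_modulus_frontier[where S = "cball 0 r" and f = h and \<xi> = t])
    show "h holomorphic_on interior (cball 0 r)" "continuous_on (closure (cball 0 r)) h"
      using hol by (auto intro: holomorphic_on_subset holomorphic_on_imp_continuous_on)
    fix u :: complex
    assume "u \<in> frontier (cball 0 r)"
    then have u: "norm u = r"
      using \<open>0 < r\<close> by simp
    then have "r ^ N * norm (h u) \<le> M"
      using bound[OF u] factor[of u] \<open>r < r'\<close> by (simp add: norm_mult norm_power)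
    then show "norm (h u) \<le> M / r ^ N"
      using \<open>0 < r\<close> by (simp add: field_simps)
  qed (use \<open>norm t \<le> r\<close> in auto)
  then have "norm t ^ N * norm (h t) \<le> norm t ^ N * (M / r ^ N)"
    by (rule mult_left_mono) simp
  then show ?thesis
    using factor[of t] assms(5,6) by (simp add: norm_mult norm_power power_divide mult.commute)
qed

lemma double_power_series_Schwarz_bound:
  fixes c :: "nat \<Rightarrow> nat \<Rightarrow> complex"
  assumes order: "\<And>i j. i + j < N \<Longrightarrow> c i j = 0"
    and series: "\<And>x y. norm x < R \<Longrightarrow> norm y < R \<Longrightarrow>
        ((\<lambda>(i, j). c i j * x ^ i * y ^ j) has_sum p x y) UNIV"
    and bound: "\<And>x y. norm x < R \<Longrightarrow> norm y < R \<Longrightarrow> norm (p x y) \<le> M"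
    and "0 < \<rho>" "\<rho> < R" "norm x \<le> \<rho>" "norm y \<le> \<rho>"
  shows "norm (p x y) \<le> M * (\<rho> / R) ^ N"
proof -
  define a where "a k = (\<Sum>i\<le>k. c i (k - i) * x ^ i * y ^ (k - i))" for k
  have scaled_inside: "norm (t * x) < R" "norm (t * y) < R" if "norm t * \<rho> < R" for t
  proof -
    have "norm t * norm x \<le> norm t * \<rho>" "norm t * norm y \<le> norm t * \<rho>"
      using assms(6,7) by (simp_all add: mult_left_mono)
    then show "norm (t * x) < R" "norm (t * y) < R"
      using that by (simp_all add: norm_mult)
  qed
  have sums: "(\<lambda>k. a k * t ^ k) sums p (t * x) (t * y)" if "norm t < R / \<rho>" for t
  proof -
    have "(\<lambda>k. \<Sum>i\<le>k. c i (k - i) * (t * x) ^ i * (t * y) ^ (k - i)) sums p (t * x) (t * y)"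
      using has_sum_imp_sums_antidiagonal[OF series[OF scaled_inside]] that \<open>0 < \<rho>\<close>
      by (simp add: field_simps)
    moreover have "c i (k - i) * (t * x) ^ i * (t * y) ^ (k - i) = c i (k - i) * x ^ i * y ^ (k - i) * t ^ k"
      if "i \<le> k" for i k
      using that by (simp add: power_mult_distrib power_add[symmetric])
    ultimately show ?thesis
      unfolding a_def sum_distrib_right by simp
  qed
  have below_R: "norm (p x y) \<le> M * (\<rho> / r) ^ N" if "\<rho> < r" "r < R" for r
  proof -
    have "norm (p (1 * x) (1 * y)) \<le> M * (norm (1::complex) / (r / \<rho>)) ^ N"
    proof (rule power_series_Schwarz_bound[where f = "\<lambda>t. p (t * x) (t * y)"])
      show "(\<lambda>k. a k * t ^ k) sums p (t * x) (t * y)" if "norm t < R / \<rho>" for t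
        using sums[OF that] .
      show "a k = 0" if "k < N" for k
        unfolding a_def using that by (intro sum.neutral) (auto intro: order)
      show "norm (p (t * x) (t * y)) \<le> M" if "norm t = r / \<rho>" for t
        using that \<open>0 < \<rho>\<close> \<open>r < R\<close> by (intro bound scaled_inside) auto
    qed (use that \<open>0 < \<rho>\<close> in \<open>auto simp: field_simps\<close>)
    then show ?thesis
      by simp
  qed
  show ?thesis
  proof (rule tendsto_le[OF trivial_limit_at_left_real, of "\<lambda>r. M * (\<rho> / r) ^ N"])
    show "((\<lambda>r. M * (\<rho> / r) ^ N) \<longlongrightarrow> M * (\<rho> / R) ^ N) (at_left R)"
      using \<open>\<rho> < R\<close> \<open>0 < \<rho>\<close> by (intro tendsto_intros) auto
    show "\<forall>\<^sub>F r in at_left R. norm (p x y) \<le> M * (\<rho> / r) ^ N"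
      using eventually_at_left_real[OF \<open>\<rho> < R\<close>] by eventually_elim (simp add: below_R)
  qed simp
qed

lemma norm_exp_omega_le:
  "norm (exp (\<i> * omega \<alpha> s t)) \<le> exp (norm t ^ s)"
  "norm (exp (- \<i> * omega \<alpha> s t)) \<le> exp (norm t ^ s)"
proof -
  have "\<bar>Im (omega \<alpha> s t)\<bar> \<le> norm t ^ s"
    using abs_Im_le_cmod[of "t ^ s"] by (simp add: omega_def norm_power)
  then show "norm (exp (\<i> * omega \<alpha> s t)) \<le> exp (norm t ^ s)"
    "norm (exp (- \<i> * omega \<alpha> s t)) \<le> exp (norm t ^ s)"
    by simp_all
qed

lemma norm_inverse_one_plus_le:
  fixes u :: "'a :: real_normed_field"
  assumes "norm u \<le> \<delta>" "\<delta> \<le> 1 / 2"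
  shows "norm (inverse (1 + u)) \<le> exp (2 * \<delta>)"
proof -
  have lower: "1 - \<delta> \<le> norm (1 + u)"
    using norm_triangle_ineq2[of 1 "- u"] assms(1) by (simp add: norm_minus_commute)
  have "norm (inverse (1 + u)) \<le> inverse (1 - \<delta>)"
    using lower assms(2) by (simp add: norm_inverse le_imp_inverse_le)
  also have "\<dots> \<le> 1 + 2 * \<delta>"
  proof -
    have "0 \<le> \<delta> * (1 - 2 * \<delta>)"
      using assms norm_ge_zero[of u] by (intro mult_nonneg_nonneg) linarith+
    then show ?thesis
      using assms(2) by (simp add: field_simps algebra_simps)
  qed
  also have "\<dots> \<le> exp (2 * \<delta>)"
    by (rule exp_ge_add_one_self)
  finally show ?thesis .
qed

lemma phi_product_eq:
  assumes "1 + p x y \<noteq> 0"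
  shows "fst (phi \<alpha> s p (x, y)) * snd (phi \<alpha> s p (x, y)) = x * y"
proof -
  define w where "w = \<i> * omega \<alpha> s (x * y)"
  have "fst (phi \<alpha> s p (x, y)) * snd (phi \<alpha> s p (x, y)) = (exp w * exp (- w)) * (x * y)"
    using assms by (simp add: phi_def Let_def w_def field_simps)
  then show ?thesis
    by (simp add: exp_minus_inverse)
qed

lemma norm_fst_phi_le:
  assumes "norm (p x y) \<le> \<delta>"
  shows "norm (fst (phi \<alpha> s p (x, y))) \<le> norm x * exp (norm (x * y) ^ s + \<delta>)"
proof -
  have "norm (1 + p x y) \<le> 1 + \<delta>"
    using norm_triangle_ineq[of 1 "p x y"] assms by simp
  also have "\<dots> \<le> exp \<delta>"
    by (rule exp_ge_add_one_self)
  finally have "norm (exp (\<i> * omega \<alpha> s (x * y))) * norm x * norm (1 + p x y)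
      \<le> exp (norm (x * y) ^ s) * norm x * exp \<delta>"
    using norm_exp_omega_le(1) by (intro mult_mono) auto
  then show ?thesis
    by (simp add: phi_def Let_def norm_mult exp_add mult_ac)
qed

lemma norm_snd_phi_le:
  assumes "norm (p x y) \<le> \<delta>" "\<delta> \<le> 1 / 2"
  shows "norm (snd (phi \<alpha> s p (x, y))) \<le> norm y * exp (norm (x * y) ^ s + 2 * \<delta>)"
proof -
  have "norm (exp (- \<i> * omega \<alpha> s (x * y))) * norm y * norm (inverse (1 + p x y))
      \<le> exp (norm (x * y) ^ s) * norm y * exp (2 * \<delta>)"
    using norm_exp_omega_le(2) norm_inverse_one_plus_le[OF assms] by (intro mult_mono) auto
  then show ?thesis
    by (simp add: phi_def Let_def norm_mult norm_divide divide_inverse exp_add mult_ac)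
qed

lemma one_plus_nonzero_if_norm_le_half:
  fixes u :: "'a :: real_normed_algebra_1"
  assumes "norm u \<le> 1 / 2"
  shows "1 + u \<noteq> 0"
proof
  assume "1 + u = 0"
  then have "u = - 1"
    by (simp add: add_eq_0_iff)
  then show False
    using assms by simp
qed

lemma phi_step_bounds:
  assumes "norm (p x y) \<le> \<delta>" "\<delta> \<le> 1 / 2" "norm (x * y) ^ s + 2 * \<delta> \<le> \<gamma>"
  shows "fst (phi \<alpha> s p (x, y)) * snd (phi \<alpha> s p (x, y)) = x * y"
    and "norm (fst (phi \<alpha> s p (x, y))) \<le> norm x * exp \<gamma>"
    and "norm (snd (phi \<alpha> s p (x, y))) \<le> norm y * exp \<gamma>"
proof -
  show "fst (phi \<alpha> s p (x, y)) * snd (phi \<alpha> s p (x, y)) = x * y"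
    using assms(1,2) by (intro phi_product_eq one_plus_nonzero_if_norm_le_half) simp
  have "0 \<le> \<delta>"
    using assms(1) norm_ge_zero order_trans by blast
  then have "norm x * exp (norm (x * y) ^ s + \<delta>) \<le> norm x * exp \<gamma>"
    using assms(3) by (intro mult_left_mono) auto
  then show "norm (fst (phi \<alpha> s p (x, y))) \<le> norm x * exp \<gamma>"
    using norm_fst_phi_le[where p = p and x = x and y = y, OF assms(1)]
    by (rule order_trans[rotated])
  have "norm y * exp (norm (x * y) ^ s + 2 * \<delta>) \<le> norm y * exp \<gamma>"
    using assms(3) by (intro mult_left_mono) auto
  then show "norm (snd (phi \<alpha> s p (x, y))) \<le> norm y * exp \<gamma>"
    using norm_snd_phi_le[where p = p and x = x and y = y, OF assms(1,2)]
    by (rule order_trans[rotated])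
qed

lemma phi_orbit_bounds:
  assumes small: "\<And>x y. norm x < \<rho> \<Longrightarrow> norm y < \<rho> \<Longrightarrow> norm (p x y) \<le> \<delta>"
    and "\<delta> \<le> 1 / 2"
    and rate: "norm (x0 * y0) ^ s + 2 * \<delta> \<le> \<gamma>"
    and stay: "\<And>j. j < k \<Longrightarrow>
        norm x0 * exp (real j * \<gamma>) < \<rho> \<and> norm y0 * exp (real j * \<gamma>) < \<rho>"
    and "j \<le> k"
  shows "fst ((phi \<alpha> s p ^^ j) (x0, y0)) * snd ((phi \<alpha> s p ^^ j) (x0, y0)) = x0 * y0
    \<and> norm (fst ((phi \<alpha> s p ^^ j) (x0, y0))) \<le> norm x0 * exp (real j * \<gamma>)
    \<and> norm (snd ((phi \<alpha> s p ^^ j) (x0, y0))) \<le> norm y0 * exp (real j * \<gamma>)"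
  using \<open>j \<le> k\<close>
proof (induction j)
  case (Suc j)
  define x y where "x = fst ((phi \<alpha> s p ^^ j) (x0, y0))" and "y = snd ((phi \<alpha> s p ^^ j) (x0, y0))"
  have orbit: "(phi \<alpha> s p ^^ Suc j) (x0, y0) = phi \<alpha> s p (x, y)"
    by (simp add: x_def y_def)
  have IH: "x * y = x0 * y0"
      "norm x \<le> norm x0 * exp (real j * \<gamma>)" "norm y \<le> norm y0 * exp (real j * \<gamma>)"
    using Suc by (simp_all add: x_def y_def)
  have "norm (p x y) \<le> \<delta>"
    using IH stay[of j] Suc.prems by (intro small) auto
  note step = phi_step_bounds[where p = p and x = x and y = y,
      OF this \<open>\<delta> \<le> 1 / 2\<close> rate[folded IH(1)], of \<alpha>]
  have grow: "a \<le> b * exp (real (Suc j) * \<gamma>)"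
    if "a \<le> c * exp \<gamma>" "c \<le> b * exp (real j * \<gamma>)" for a b c :: real
    using that mult_right_mono[OF that(2), of "exp \<gamma>"]
    by (simp add: exp_add[symmetric] distrib_right mult.assoc add.commute)
  show ?case
    unfolding orbit using grow[OF step(2) IH(2)] grow[OF step(3) IH(3)] step(1) IH(1) by simp
qed simp

lemma iter_defined_at_within_bidisc:
  assumes "\<rho> \<le> R"
    and small: "\<And>x y. norm x < \<rho> \<Longrightarrow> norm y < \<rho> \<Longrightarrow> norm (p x y) \<le> \<delta>"
    and "\<delta> \<le> 1 / 2"
    and rate: "norm (x0 * y0) ^ s + 2 * \<delta> \<le> \<gamma>"
    and stay: "\<And>j. j \<le> k \<Longrightarrow>
        norm x0 * exp (real j * \<gamma>) < \<rho> \<and> norm y0 * exp (real j * \<gamma>) < \<rho>"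
  shows "iter_defined_at \<alpha> s R p k (x0, y0) \<and> (phi \<alpha> s p ^^ k) (x0, y0) \<in> bidisc \<rho>"
proof -
  have orbit_in: "(phi \<alpha> s p ^^ j) (x0, y0) \<in> bidisc \<rho>" if "j \<le> k" for j
    using phi_orbit_bounds[where p = p and \<rho> = \<rho> and \<delta> = \<delta>,
        OF small \<open>\<delta> \<le> 1 / 2\<close> rate _ that, of \<alpha>] stay[OF that] stay
    unfolding bidisc_def by (fastforce simp: case_prod_unfold)
  have "phi_defined_at R p ((phi \<alpha> s p ^^ j) (x0, y0))" if "j < k" for j
  proof -
    have "(phi \<alpha> s p ^^ j) (x0, y0) \<in> bidisc \<rho>"
      using that by (intro orbit_in) simp
    then have "(phi \<alpha> s p ^^ j) (x0, y0) \<in> bidisc R"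
      and "norm (p (fst ((phi \<alpha> s p ^^ j) (x0, y0))) (snd ((phi \<alpha> s p ^^ j) (x0, y0)))) \<le> 1 / 2"
      using \<open>\<rho> \<le> R\<close> small \<open>\<delta> \<le> 1 / 2\<close> unfolding bidisc_def by fastforce+
    then show ?thesis
      unfolding phi_defined_at_def using one_plus_nonzero_if_norm_le_half by blast
  qed
  then show ?thesis
    unfolding iter_defined_at_def using orbit_in[of k] by simp
qed

lemma iter_defined_at_maps_bidisc:
  assumes "n > 0" "k \<le> n" "0 < d" "4 * d \<le> R" "d ^ (2 * s) \<le> 1 / (2 * real n)"
    and small: "\<And>x y. norm x < 4 * d \<Longrightarrow> norm y < 4 * d \<Longrightarrow>
        norm (p x y) \<le> 1 / (4 * real n)"
    and "z \<in> bidisc d"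
  shows "iter_defined_at \<alpha> s R p k z \<and> (phi \<alpha> s p ^^ k) z \<in> bidisc (4 * d)"
proof -
  obtain x0 y0 where z: "z = (x0, y0)" "norm x0 < d" "norm y0 < d"
    using \<open>z \<in> bidisc d\<close> by (auto simp: bidisc_def)
  have "norm (x0 * y0) ^ s \<le> (d * d) ^ s"
    using z \<open>0 < d\<close> unfolding norm_mult by (intro power_mono mult_mono) auto
  then have rate: "norm (x0 * y0) ^ s + 2 * (1 / (4 * real n)) \<le> 1 / real n"
    using assms(5) by (simp add: power_mult power2_eq_square field_simps)
  have growth: "exp (real j * (1 / real n)) < 4" if "j \<le> k" for j
  proof -
    have "real j * (1 / real n) \<le> 1"
      using that assms(1,2) by simp
    then have "exp (real j * (1 / real n)) \<le> exp 1"
      by simp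
    then show ?thesis
      using exp_le by linarith
  qed
  have "norm u * exp (real j * (1 / real n)) < 4 * d" if "norm u < d" "j \<le> k" for u j
    using mult_strict_mono[OF that(1) growth[OF that(2)]] \<open>0 < d\<close> by simp
  then show ?thesis
    unfolding z(1) using z(2,3) assms(1,4)
    by (intro iter_defined_at_within_bidisc[where p = p, OF _ small _ rate]) auto
qed

lemma Min_radius_bounds:
  fixes s n :: nat and R m0 :: real
  assumes "s > 0" "n > 0" "0 < R" "m0 > 0"
  defines "d \<equiv> Min {R ^ (2 * s + 1) / (2 ^ (6 * s + 6) * m0),
                     (1 / (2 * real n)) powr (1 / (2 * real s)), R / 16}"
  shows "0 < d" "4 * d < R" "d ^ (2 * s) \<le> 1 / (2 * real n)"
    and "m0 * (4 * d / R) ^ (2 * s + 1) \<le> 1 / (4 * real n)"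
proof -
  define A where "A = R ^ (2 * s + 1) / (2 ^ (6 * s + 6) * m0)"
  define B where "B = (1 / (2 * real n)) powr (1 / (2 * real s))"
  have "0 < A" "0 < B"
    using assms by (simp_all add: A_def B_def)
  moreover have "d = min A (min B (R / 16))"
    by (simp add: d_def A_def B_def)
  ultimately have d: "0 < d" "d \<le> A" "d \<le> B" "d \<le> R / 16"
    using assms(3) by auto
  then show "0 < d" "4 * d < R"
    by simp_all
  have "d ^ (2 * s) \<le> B ^ (2 * s)"
    using d by (intro power_mono) auto
  also have "\<dots> = 1 / (2 * real n)"
    using assms(1,2) by (simp add: B_def powr_realpow[symmetric] powr_powr)
  finally show d_pow: "d ^ (2 * s) \<le> 1 / (2 * real n)" .
  have "(4::real) ^ (2 * s + 1) * 2 = 2 ^ (4 * s + 3)"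
    by (simp add: power_add power_mult)
  also have "\<dots> \<le> 2 ^ (6 * s + 6)"
    by (rule power_increasing) auto
  finally have pow2: "(4::real) ^ (2 * s + 1) * 2 \<le> 2 ^ (6 * s + 6)" .
  have "m0 * (4 * d / R) ^ (2 * s + 1) = m0 * 4 ^ (2 * s + 1) * (d ^ (2 * s) * d) / R ^ (2 * s + 1)"
    by (simp add: power_divide power_mult_distrib)
  also have "\<dots> \<le> m0 * 4 ^ (2 * s + 1) * (1 / (2 * real n) * A) / R ^ (2 * s + 1)"
    using assms d d_pow by (intro divide_right_mono mult_left_mono mult_mono) auto
  also have "\<dots> = 4 ^ (2 * s + 1) / (2 ^ (6 * s + 6) * (2 * real n))"
    using assms by (simp add: A_def field_simps)
  also have "\<dots> \<le> 1 / (4 * real n)"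
    using pow2 assms(2) by (simp add: field_simps)
  finally show "m0 * (4 * d / R) ^ (2 * s + 1) \<le> 1 / (4 * real n)" .
qed

theorem lemma3p1:
  fixes s n :: nat and \<alpha> R m0 :: real
    and c :: "nat \<Rightarrow> nat \<Rightarrow> complex"
    and p :: "complex \<Rightarrow> complex \<Rightarrow> complex"
  assumes "s > 0" and "n > 0"
    and "0 < R" and "R < 1" and "m0 > 0"
    and order: "\<And>i j. i + j < 2 * s + 1 \<Longrightarrow> c i j = 0"
    and series: "\<And>x y. norm x < R \<Longrightarrow> norm y < R \<Longrightarrow>
        ((\<lambda>(i, j). c i j * x ^ i * y ^ j) has_sum p x y) UNIV"
    and bound: "\<And>x y. norm x < R \<Longrightarrow> norm y < R \<Longrightarrow> norm (p x y) \<le> m0"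
  shows "let d0 = Min {R ^ (2 * s + 1) / (2 ^ (6 * s + 6) * m0),
                       (1 / (2 * real n)) powr (1 / (2 * real s)),
                       R / 16}
         in \<forall>k. 1 \<le> k \<and> k \<le> n \<longrightarrow>
              (\<forall>z \<in> bidisc d0. iter_defined_at \<alpha> s R p k z \<and>
                                 (phi \<alpha> s p ^^ k) z \<in> bidisc (4 * d0))"
proof -
  define d where "d = Min {R ^ (2 * s + 1) / (2 ^ (6 * s + 6) * m0),
                           (1 / (2 * real n)) powr (1 / (2 * real s)), R / 16}"
  note d = Min_radius_bounds[OF assms(1,2,3,5), folded d_def]
  have small: "norm (p x y) \<le> 1 / (4 * real n)" if "norm x < 4 * d" "norm y < 4 * d" for x y
    using double_power_series_Schwarz_bound[where N = "2 * s + 1" and R = R and \<rho> = "4 * d",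
        OF order series bound, of x y] d that by fastforce
  have "iter_defined_at \<alpha> s R p k z \<and> (phi \<alpha> s p ^^ k) z \<in> bidisc (4 * d)"
    if "k \<le> n" "z \<in> bidisc d" for k z
    by (rule iter_defined_at_maps_bidisc[where p = p,
          OF \<open>n > 0\<close> that(1) d(1) less_imp_le[OF d(2)] d(3) small that(2)])
  then show ?thesis
    unfolding Let_def d_def by blast
qed

end
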